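(* For all $\lambda>0$ and all $0<x<\pi/2$, \[ \left|\int_0^x \frac{e^{it\lambda}}{\cos t}\,dt-\frac{i}{\lambda}\right|<\frac{1}{\lambda}-M(\lambda)+M(\lambda\cos x). \]
   Context: For $t>0$, $M(t)=\int_0^\infty \frac{e^{-tu}}{\sqrt{u^2+1}}\,du$. *)

theory Defs
  imports "HOL-Analysis.Analysis"
begin

definition M :: "real \<Rightarrow> real" where
  "M t = (LINT u:{0..}|lborel. exp (- t * u) / sqrt (u\<^sup>2 + 1))"

end

theory Submission
  imports Defs "HOL-Complex_Analysis.Complex_Analysis" "HOL-Real_Asymp.Real_Asymp"
begin

(* Apply Cauchy's theorem to f = exp_sec lam, i.e. f(z) = e^{i lam z} / cos z, on the rectangle with
   corners 0, x, x + iR, iR, which lies in the strip |Re z| < pi/2 where cos has no zeros. The bottom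
   side is the integral in question and the top side is O(e^{-lam R}). On the left side
   f(is) = e^{-lam s} / cosh s, and since |cos(x + is)|^2 = cos^2 x + sinh^2 s, the two vertical sides
   minus i/lam = i * int e^{-lam s} ds are bounded by the integral of e^{-lam s} w(sinh s), where
   w = side_weight (cos x), i.e. w(y) = 1 - 1/sqrt(1 + y^2) + 1/sqrt(cos^2 x + y^2). The weight w is
   strictly decreasing and sinh s > s for s > 0, so this is strictly less than the integral of
   e^{-lam s} w(s), which equals 1/lam - M(lam) + M(lam cos x) after substituting s = u cos x. *)

lemma sinh_ge_self: "0 \<le> s \<Longrightarrow> s \<le> sinh (s::real)"
  using real_le_x_sinh by (simp add: sinh_field_def exp_minus)

lemma sinh_gt_self:
  fixes s :: real
  assumes "0 < s"
  shows "s < sinh s"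
proof -
  have "1 < cosh (s/2)"
    using assms cosh_real_ge_1[of "s/2"] cosh_real_one_iff[of "s/2"] by linarith
  hence "s/2 * 1 < sinh (s/2) * cosh (s/2)"
    using assms sinh_ge_self[of "s/2"] by (intro mult_le_less_imp_less) auto
  thus ?thesis
    using sinh_double[of "s/2"] by simp
qed

definition side_weight :: "real \<Rightarrow> real \<Rightarrow> real" where
  "side_weight c y = 1 - 1 / sqrt (1 + y\<^sup>2) + 1 / sqrt (c\<^sup>2 + y\<^sup>2)"

lemma inverse_sqrt_diff:
  fixes p q :: real
  assumes "0 < p" "0 < q"
  shows "1 / sqrt p - 1 / sqrt q = (q - p) / (sqrt p * sqrt q * (sqrt p + sqrt q))"
proof -
  have "q - p = (sqrt q - sqrt p) * (sqrt p + sqrt q)"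
    using assms by (simp add: algebra_simps flip: power2_eq_square)
  moreover have "0 < sqrt p + sqrt q"
    using assms by (simp add: add_pos_pos)
  ultimately have "(q - p) / (sqrt p * sqrt q * (sqrt p + sqrt q)) = (sqrt q - sqrt p) / (sqrt p * sqrt q)"
    by simp
  also have "\<dots> = 1 / sqrt p - 1 / sqrt q"
    using assms by (simp add: field_simps)
  finally show ?thesis ..
qed

lemma side_weight_eq:
  assumes "c \<noteq> 0"
  shows "side_weight c y = 1 + (1 - c\<^sup>2) /
           (sqrt (c\<^sup>2 + y\<^sup>2) * sqrt (1 + y\<^sup>2) * (sqrt (c\<^sup>2 + y\<^sup>2) + sqrt (1 + y\<^sup>2)))"
  using inverse_sqrt_diff[of "c\<^sup>2 + y\<^sup>2" "1 + y\<^sup>2"] assms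
  by (simp add: side_weight_def add_pos_nonneg)

lemma side_weight_strict_antimono:
  fixes c a b :: real
  assumes c: "0 < c" "c < 1" and ab: "0 \<le> a" "a < b"
  shows "side_weight c b < side_weight c a"
proof -
  define den where "den y = sqrt (c\<^sup>2 + y\<^sup>2) * sqrt (1 + y\<^sup>2) * (sqrt (c\<^sup>2 + y\<^sup>2) + sqrt (1 + y\<^sup>2))"
    for y :: real
  have "a\<^sup>2 < b\<^sup>2"
    using ab by (simp add: power_strict_mono)
  hence "den a < den b"
    unfolding den_def using c
    by (intro mult_strict_mono add_strict_mono) (auto simp: add_pos_nonneg)
  moreover have "0 < den a"
    unfolding den_def using c by (simp add: add_pos_nonneg)
  moreover have "0 < 1 - c\<^sup>2"
    using c by (simp add: power_less_one_iff)
  ultimately have "(1 - c\<^sup>2) / den b < (1 - c\<^sup>2) / den a"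
    by (intro divide_strict_left_mono) auto
  thus ?thesis
    using c by (simp add: side_weight_eq den_def)
qed

lemma side_weight_antimono:
  fixes c a b :: real
  assumes "0 < c" "c < 1" "0 \<le> a" "a \<le> b"
  shows "side_weight c b \<le> side_weight c a"
  using side_weight_strict_antimono[of c a b] assms by (cases "a = b") auto

lemma continuous_on_side_weight [continuous_intros]:
  assumes "c \<noteq> 0" "continuous_on A f"
  shows "continuous_on A (\<lambda>x. side_weight c (f x))"
proof -
  have "1 + y\<^sup>2 \<noteq> 0" "c\<^sup>2 + y\<^sup>2 \<noteq> 0" for y :: real
    using assms(1) by (auto simp: add_nonneg_eq_0_iff)
  thus ?thesis
    unfolding side_weight_def using assms(2) by (intro continuous_intros) simp_all
qed

lemma set_integrable_M_integrand:
  fixes a :: real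
  assumes "0 < a"
  shows "set_integrable lborel {0..} (\<lambda>u. exp (- a * u) / sqrt (u\<^sup>2 + 1))"
proof (rule set_integrable_bound)
  have "(\<lambda>u. exp (- a * u)) absolutely_integrable_on {0::real..}"
    using integrable_on_exp_minus_to_infinity[OF assms]
    by (intro nonnegative_absolutely_integrable_1) auto
  thus "set_integrable lborel {0::real..} (\<lambda>u. exp (- a * u))"
    unfolding set_integrable_def
    by (subst (asm) integrable_completion)
       (auto simp flip: set_borel_measurable_def intro!: borel_measurable_continuous_onI continuous_intros)
  show "set_borel_measurable lborel {0..} (\<lambda>u. exp (- a * u) / sqrt (u\<^sup>2 + 1))"
    unfolding set_borel_measurable_def by measurable
  have "exp (- a * u) / sqrt (u\<^sup>2 + 1) \<le> exp (- a * u) / 1" for u :: real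
    by (intro divide_left_mono) (auto intro: add_nonneg_pos)
  thus "AE u in lborel. u \<in> {0..} \<longrightarrow> norm (exp (- a * u) / sqrt (u\<^sup>2 + 1)) \<le> norm (exp (- a * u))"
    by simp
qed

lemma tendsto_integral_M:
  fixes a :: real
  assumes "0 < a"
  shows "((\<lambda>R. integral {0..R} (\<lambda>u. exp (- a * u) / sqrt (u\<^sup>2 + 1))) \<longlongrightarrow> M a) at_top"
proof -
  note int = set_integrable_M_integrand[OF assms]
  have "(LINT u:{0..R}|lborel. exp (- a * u) / sqrt (u\<^sup>2 + 1))
          = integral {0..R} (\<lambda>u. exp (- a * u) / sqrt (u\<^sup>2 + 1))" for R
    by (rule set_borel_integral_eq_integral(2)[OF set_integrable_subset[OF int]]) auto
  moreover have "((\<lambda>R. LINT u:{0..R}|lborel. exp (- a * u) / sqrt (u\<^sup>2 + 1)) \<longlongrightarrow> M a) at_top"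
    unfolding M_def by (rule tendsto_set_lebesgue_integral_at_top[OF _ int]) simp
  ultimately show ?thesis
    by simp
qed

lemma integral_exp_sqrt_rescale:
  fixes lam c R :: real
  assumes "0 < c" "0 \<le> R"
  shows "integral {0..R} (\<lambda>s. exp (- lam * s) / sqrt (c\<^sup>2 + s\<^sup>2))
           = integral {0..R/c} (\<lambda>u. exp (- (lam * c) * u) / sqrt (u\<^sup>2 + 1))"
proof -
  have "c\<^sup>2 + u\<^sup>2 \<noteq> 0" for u :: real
    using assms(1) by (auto simp: add_nonneg_eq_0_iff)
  hence cont: "continuous_on {0..R} (\<lambda>s. exp (- lam * s) / sqrt (c\<^sup>2 + s\<^sup>2))"
    by (intro continuous_intros) simp_all
  have sqrt_eq: "sqrt (c\<^sup>2 + (c * u)\<^sup>2) = c * sqrt (u\<^sup>2 + 1)" for u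
  proof -
    have "c\<^sup>2 + (c * u)\<^sup>2 = c\<^sup>2 * (u\<^sup>2 + 1)"
      by (simp add: algebra_simps power_mult_distrib)
    thus ?thesis
      using assms(1) by (simp add: real_sqrt_mult)
  qed
  have "c *\<^sub>R (exp (- lam * (c * u)) / sqrt (c\<^sup>2 + (c * u)\<^sup>2))
           = exp (- (lam * c) * u) / sqrt (u\<^sup>2 + 1)" for u
    using assms(1) by (simp only: sqrt_eq real_scaleR_def) (simp add: field_simps)
  moreover have "((\<lambda>u. c *\<^sub>R (exp (- lam * (c * u)) / sqrt (c\<^sup>2 + (c * u)\<^sup>2)))
           has_integral integral {c * 0..c * (R / c)} (\<lambda>s. exp (- lam * s) / sqrt (c\<^sup>2 + s\<^sup>2))) {0..R/c}"
    using assms cont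
    by (intro has_integral_substitution[where c=0 and d=R])
       (auto intro!: derivative_eq_intros simp: field_simps)
  ultimately show ?thesis
    using assms(1) by (simp add: integral_unique)
qed

lemma has_integral_exp_neg:
  fixes lam R :: real
  assumes "lam \<noteq> 0" "0 \<le> R"
  shows "((\<lambda>s. exp (- lam * s)) has_integral (1 - exp (- lam * R)) / lam) {0..R}"
proof -
  have "((\<lambda>s. exp (- lam * s)) has_integral (- exp (- lam * R) / lam - (- exp (- lam * 0) / lam))) {0..R}"
    using assms
    by (intro fundamental_theorem_of_calculus)
       (auto intro!: derivative_eq_intros simp flip: has_real_derivative_iff_has_vector_derivative)
  thus ?thesis
    by (simp add: diff_divide_distrib)
qed

lemma integral_exp_side_weight:
  fixes lam c R :: real
  assumes lam: "lam \<noteq> 0" and c: "0 < c" and R: "0 \<le> R"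
  shows "integral {0..R} (\<lambda>s. exp (- lam * s) * side_weight c s)
           = (1 - exp (- lam * R)) / lam - integral {0..R} (\<lambda>s. exp (- lam * s) / sqrt (s\<^sup>2 + 1))
             + integral {0..R/c} (\<lambda>u. exp (- (lam * c) * u) / sqrt (u\<^sup>2 + 1))"
proof -
  define P where "P = (\<lambda>s::real. exp (- lam * s) / sqrt (s\<^sup>2 + 1))"
  define Q where "Q = (\<lambda>s::real. exp (- lam * s) / sqrt (c\<^sup>2 + s\<^sup>2))"
  have "u\<^sup>2 + 1 \<noteq> 0" "c\<^sup>2 + u\<^sup>2 \<noteq> 0" for u :: real
    using c by (auto simp: add_nonneg_eq_0_iff)
  hence "P integrable_on {0..R}" "Q integrable_on {0..R}"
    unfolding P_def Q_def by (auto intro!: integrable_continuous_interval continuous_intros)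
  hence "((\<lambda>s. exp (- lam * s) - P s + Q s) has_integral
           (1 - exp (- lam * R)) / lam - integral {0..R} P + integral {0..R} Q) {0..R}"
    using lam R by (intro has_integral_add has_integral_diff has_integral_exp_neg) auto
  moreover have "exp (- lam * s) * side_weight c s = exp (- lam * s) - P s + Q s" for s
    by (simp add: side_weight_def P_def Q_def algebra_simps add.commute)
  ultimately show ?thesis
    using integral_exp_sqrt_rescale[OF c R, of lam] by (simp add: P_def Q_def integral_unique)
qed

lemma tendsto_integral_side_weight:
  fixes lam c :: real
  assumes lam: "0 < lam" and c: "0 < c"
  shows "((\<lambda>R. integral {0..R} (\<lambda>s. exp (- lam * s) * side_weight c s))
           \<longlongrightarrow> 1 / lam - M lam + M (lam * c)) at_top"
proof -
  have "((\<lambda>R. exp (- lam * R)) \<longlongrightarrow> 0) at_top"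
    using lam by real_asymp
  hence lim_exp: "((\<lambda>R. (1 - exp (- lam * R)) / lam) \<longlongrightarrow> (1 - 0) / lam) at_top"
    by (rule tendsto_divide[OF tendsto_diff[OF tendsto_const] tendsto_const]) (use lam in simp)
  have lim_rescaled: "((\<lambda>R. integral {0..R/c} (\<lambda>u. exp (- (lam * c) * u) / sqrt (u\<^sup>2 + 1)))
                        \<longlongrightarrow> M (lam * c)) at_top"
    using lam c by (intro filterlim_compose[OF tendsto_integral_M]) (simp, real_asymp)
  have "((\<lambda>R. (1 - exp (- lam * R)) / lam - integral {0..R} (\<lambda>s. exp (- lam * s) / sqrt (s\<^sup>2 + 1))
            + integral {0..R/c} (\<lambda>u. exp (- (lam * c) * u) / sqrt (u\<^sup>2 + 1)))
          \<longlongrightarrow> (1 - 0) / lam - M lam + M (lam * c)) at_top"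
    by (intro tendsto_add tendsto_diff lim_exp lim_rescaled tendsto_integral_M lam)
  moreover have "\<forall>\<^sub>F R in at_top.
      (1 - exp (- lam * R)) / lam - integral {0..R} (\<lambda>s. exp (- lam * s) / sqrt (s\<^sup>2 + 1))
        + integral {0..R/c} (\<lambda>u. exp (- (lam * c) * u) / sqrt (u\<^sup>2 + 1))
      = integral {0..R} (\<lambda>s. exp (- lam * s) * side_weight c s)"
    using lam c
    by (intro eventually_mono[OF eventually_ge_at_top[of 0]] integral_exp_side_weight[symmetric]) auto
  ultimately show ?thesis
    by (simp add: Lim_transform_eventually)
qed

lemma integral_side_weight_sinh_gap:
  fixes lam c :: real
  assumes c: "0 < c" "c < 1"
  obtains D where "0 < D"
    "\<And>R. 1 \<le> R \<Longrightarrow> integral {0..R} (\<lambda>s. exp (- lam * s) * side_weight c (sinh s)) + D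
                        \<le> integral {0..R} (\<lambda>s. exp (- lam * s) * side_weight c s)"
proof -
  define \<sigma> where "\<sigma> = (\<lambda>s. exp (- lam * s) * side_weight c (sinh s))"
  define \<tau> where "\<tau> = (\<lambda>s. exp (- lam * s) * side_weight c s)"
  have cont: "continuous_on A \<sigma>" "continuous_on A \<tau>" for A
    unfolding \<sigma>_def \<tau>_def using c by (intro continuous_intros; simp)+
  have int: "\<sigma> integrable_on {a..b}" "\<tau> integrable_on {a..b}" for a b
    using cont by (auto intro: integrable_continuous_interval)
  have le: "\<sigma> s \<le> \<tau> s" if "0 \<le> s" for s
    unfolding \<sigma>_def \<tau>_def using c that sinh_ge_self[OF that]
    by (intro mult_left_mono side_weight_antimono) auto
  have "integral {0..1} \<sigma> < integral {0..1} \<tau>"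
  proof (rule integral_less_real[OF cont])
    fix s :: real assume "s \<in> {0<..<1}"
    thus "\<sigma> s < \<tau> s"
      unfolding \<sigma>_def \<tau>_def using c sinh_gt_self[of s]
      by (intro mult_strict_left_mono side_weight_strict_antimono) auto
  qed simp
  moreover have "integral {0..R} \<sigma> + (integral {0..1} \<tau> - integral {0..1} \<sigma>) \<le> integral {0..R} \<tau>"
    if "1 \<le> R" for R
  proof -
    have "integral {1..R} \<sigma> \<le> integral {1..R} \<tau>"
      using int le by (intro integral_le) auto
    moreover have "integral {0..1} f + integral {1..R} f = integral {0..R} f"
      if "f integrable_on {0..R}" for f :: "real \<Rightarrow> real"
      using \<open>1 \<le> R\<close> that by (intro Henstock_Kurzweil_Integration.integral_combine) auto
    note this[OF int(1)] this[OF int(2)]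
    ultimately show ?thesis
      by linarith
  qed
  ultimately show ?thesis
    using that[of "integral {0..1} \<tau> - integral {0..1} \<sigma>"] unfolding \<sigma>_def \<tau>_def by simp
qed

lemma norm_cos_squared_sinh: "(cmod (cos z))\<^sup>2 = (cos (Re z))\<^sup>2 + (sinh (Im z))\<^sup>2"
  by (simp add: norm_cos_squared sinh_field_def exp_minus power_divide)

lemma cos_nonzero_strip:
  assumes "\<bar>Re z\<bar> < pi / 2"
  shows "cos z \<noteq> 0"
proof -
  have "0 < cos (Re z)"
    using assms by (intro cos_gt_zero_pi) auto
  hence "0 < (cmod (cos z))\<^sup>2"
    unfolding norm_cos_squared_sinh by (simp add: add_pos_nonneg)
  thus ?thesis
    by auto
qed

lemma convex_abs_Re_less: "convex {z::complex. \<bar>Re z\<bar> < a}"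
proof -
  have "{z::complex. \<bar>Re z\<bar> < a} = {z. Re z < a} \<inter> {z. Re z > - a}"
    by auto
  thus ?thesis
    by (simp add: convex_Int convex_halfspace_Re_lt convex_halfspace_Re_gt)
qed

lemma Cauchy_theorem_convex_quadrilateral:
  fixes f :: "complex \<Rightarrow> complex"
  assumes hol: "f holomorphic_on S" and "convex S" and abcd: "a \<in> S" "b \<in> S" "c \<in> S" "d \<in> S"
  shows "contour_integral (linepath a b) f + contour_integral (linepath b c) f
           + contour_integral (linepath c d) f = contour_integral (linepath a d) f"
proof -
  have cont: "continuous_on (closed_segment p q) f" if "p \<in> S" "q \<in> S" for p q
    using holomorphic_on_imp_continuous_on[OF hol] closed_segment_subset[OF that \<open>convex S\<close>]
    by (rule continuous_on_subset)
  define g where "g = linepath a b +++ (linepath b c +++ (linepath c d +++ linepath d a))"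
  have "(f has_contour_integral 0) g"
    using \<open>convex S\<close> abcd closed_segment_subset[OF _ _ \<open>convex S\<close>]
    by (intro Cauchy_theorem_convex_simple[OF hol]) (auto simp: g_def path_image_join)
  moreover have "contour_integral g f = contour_integral (linepath a b) f + (contour_integral (linepath b c) f
         + (contour_integral (linepath c d) f + contour_integral (linepath d a) f))"
    unfolding g_def using abcd cont
    by (simp add: contour_integrable_joinI valid_path_join contour_integrable_continuous_linepath)
  moreover have "contour_integral (linepath d a) f = - contour_integral (linepath a d) f"
    using contour_integral_reverse_linepath[OF cont[OF abcd(1,4)]] by simp
  ultimately show ?thesis
    by (simp add: contour_integral_unique algebra_simps)
qed

lemma has_integral_vertical_linepath:
  fixes f :: "complex \<Rightarrow> complex"
  assumes R: "0 < R" and cont: "continuous_on (closed_segment a (a + \<i> * of_real R)) f"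
  shows "((\<lambda>s. \<i> * f (a + \<i> * of_real s)) has_integral
            contour_integral (linepath a (a + \<i> * of_real R)) f) {0..R}"
proof -
  define F where "F = (\<lambda>s::real. \<i> * f (a + \<i> * of_real s))"
  have "(\<lambda>s. a + \<i> * of_real s) ` {0..R} \<subseteq> closed_segment a (a + \<i> * of_real R)"
    using R by (auto simp: in_segment scaleR_conv_of_real field_simps intro!: exI[of _ "_ / R"])
  hence contF: "continuous_on {0..R} F"
    unfolding F_def by (intro continuous_intros continuous_on_compose2[OF cont])
  have "((\<lambda>t. R *\<^sub>R F (R * t)) has_integral integral {R * 0..R * 1} F) {0..1}"
    using R contF
    by (intro has_integral_substitution[where c=0 and d=R])
       (auto intro!: derivative_eq_intros simp: mult_le_cancel_left1)
  hence "(f has_contour_integral integral {0..R} F) (linepath a (a + \<i> * of_real R))"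
    unfolding has_contour_integral_linepath
    by (rule has_integral_eq_rhs[OF has_integral_eq, rotated])
       (auto simp: F_def linepath_def scaleR_conv_of_real algebra_simps)
  hence "contour_integral (linepath a (a + \<i> * of_real R)) f = integral {0..R} F"
    by (rule contour_integral_unique)
  thus ?thesis
    using integrable_integral[OF integrable_continuous_interval[OF contF]] by (simp add: F_def)
qed

definition exp_sec :: "real \<Rightarrow> complex \<Rightarrow> complex" where
  "exp_sec lam z = exp (\<i> * of_real lam * z) / cos z"

lemma holomorphic_on_exp_sec: "exp_sec lam holomorphic_on {z. \<bar>Re z\<bar> < pi / 2}"
  unfolding exp_sec_def by (intro holomorphic_intros) (use cos_nonzero_strip in blast)

lemma norm_exp_sec:
  "cmod (exp_sec lam z) = exp (- lam * Im z) / sqrt ((cos (Re z))\<^sup>2 + (sinh (Im z))\<^sup>2)"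
proof -
  have "cmod (cos z) = sqrt ((cos (Re z))\<^sup>2 + (sinh (Im z))\<^sup>2)"
    by (metis norm_cos_squared_sinh norm_ge_zero real_sqrt_unique)
  thus ?thesis
    by (simp add: exp_sec_def norm_divide)
qed

lemma exp_sec_imaginary_axis:
  "exp_sec lam (\<i> * of_real s) = of_real (exp (- lam * s) / cosh s)"
proof -
  have "cos (\<i> * of_real s) = of_real (cosh s)"
    using cosh_real[of s] by (simp add: cosh_field_def exp_minus)
  moreover have "\<i> * of_real lam * (\<i> * of_real s) = complex_of_real (- lam * s)"
    by (simp add: algebra_simps)
  hence "exp (\<i> * of_real lam * (\<i> * of_real s)) = of_real (exp (- lam * s))"
    by (simp only: exp_of_real)
  ultimately show ?thesis
    by (simp add: exp_sec_def)
qed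

lemma norm_exp_sec_vertical_sides_le:
  "cmod (exp_sec lam (\<i> * of_real s) - exp_sec lam (of_real x + \<i> * of_real s) - of_real (exp (- lam * s)))
     \<le> exp (- lam * s) * side_weight (cos x) (sinh s)"
proof -
  have "sqrt ((cosh s)\<^sup>2) = cosh s"
    by simp
  hence cosh_eq: "cosh s = sqrt (1 + (sinh s)\<^sup>2)"
    by (simp add: cosh_square_eq add.commute)
  have "exp (- lam * s) / cosh s \<le> exp (- lam * s)"
    using cosh_real_ge_1[of s] by (simp add: divide_le_eq mult_le_cancel_left1)
  hence "cmod (exp_sec lam (\<i> * of_real s) - of_real (exp (- lam * s)))
          = exp (- lam * s) - exp (- lam * s) / cosh s"
    unfolding exp_sec_imaginary_axis of_real_diff[symmetric] norm_of_real by simp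
  moreover have "cmod (exp_sec lam (of_real x + \<i> * of_real s))
          = exp (- lam * s) / sqrt ((cos x)\<^sup>2 + (sinh s)\<^sup>2)"
    by (simp add: norm_exp_sec)
  ultimately show ?thesis
    using norm_triangle_ineq4[of "exp_sec lam (\<i> * of_real s) - of_real (exp (- lam * s))"
        "exp_sec lam (of_real x + \<i> * of_real s)"]
    by (simp add: side_weight_def cosh_eq algebra_simps)
qed

lemma norm_exp_sec_le:
  assumes "1 \<le> Im z"
  shows "cmod (exp_sec lam z) \<le> exp (- lam * Im z)"
proof -
  have "1 \<le> sinh (Im z)"
    using assms sinh_ge_self[of "Im z"] by simp
  hence "1 \<le> (sinh (Im z))\<^sup>2"
    by (simp add: one_le_power)
  hence "1 \<le> sqrt ((cos (Re z))\<^sup>2 + (sinh (Im z))\<^sup>2)"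
    by (simp add: add_increasing)
  thus ?thesis
    by (simp add: norm_exp_sec divide_le_eq mult_le_cancel_left1)
qed

lemma continuous_on_exp_sec_segment:
  assumes "\<bar>Re p\<bar> < pi / 2" "\<bar>Re q\<bar> < pi / 2"
  shows "continuous_on (closed_segment p q) (exp_sec lam)"
proof (rule continuous_on_subset[OF holomorphic_on_imp_continuous_on[OF holomorphic_on_exp_sec]])
  show "closed_segment p q \<subseteq> {z. \<bar>Re z\<bar> < pi / 2}"
    using assms by (intro closed_segment_subset convex_abs_Re_less) auto
qed

lemma norm_exp_sec_vertical_integrals_le:
  fixes lam x R :: real
  assumes lam: "0 < lam" and x: "\<bar>x\<bar> < pi / 2" and R: "0 < R"
  shows "cmod (contour_integral (linepath 0 (\<i> * of_real R)) (exp_sec lam)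
               - contour_integral (linepath (of_real x) (of_real x + \<i> * of_real R)) (exp_sec lam)
               - \<i> * of_real ((1 - exp (- lam * R)) / lam))
         \<le> integral {0..R} (\<lambda>s. exp (- lam * s) * side_weight (cos x) (sinh s))"
proof -
  have left: "((\<lambda>s. \<i> * exp_sec lam (\<i> * of_real s)) has_integral
                 contour_integral (linepath 0 (\<i> * of_real R)) (exp_sec lam)) {0..R}"
    using has_integral_vertical_linepath[OF R continuous_on_exp_sec_segment, of 0] by simp
  have right: "((\<lambda>s. \<i> * exp_sec lam (of_real x + \<i> * of_real s)) has_integral
                 contour_integral (linepath (of_real x) (of_real x + \<i> * of_real R)) (exp_sec lam)) {0..R}"
    using has_integral_vertical_linepath[OF R continuous_on_exp_sec_segment] x by simp
  have "((\<lambda>s. \<i> * of_real (exp (- lam * s))) has_integral \<i> * of_real ((1 - exp (- lam * R)) / lam)) {0..R}"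
    using has_integral_exp_neg[of lam R] lam R
    by (intro has_integral_mult_right has_integral_of_real) auto
  from has_integral_diff[OF has_integral_diff[OF left right] this]
  have diff: "((\<lambda>s. \<i> * (exp_sec lam (\<i> * of_real s) - exp_sec lam (of_real x + \<i> * of_real s)
                       - of_real (exp (- lam * s)))) has_integral
           contour_integral (linepath 0 (\<i> * of_real R)) (exp_sec lam)
           - contour_integral (linepath (of_real x) (of_real x + \<i> * of_real R)) (exp_sec lam)
           - \<i> * of_real ((1 - exp (- lam * R)) / lam)) {0..R}"
    by (simp add: algebra_simps)
  have "0 < cos x"
    using x by (intro cos_gt_zero_pi) auto
  hence "(\<lambda>s. exp (- lam * s) * side_weight (cos x) (sinh s)) integrable_on {0..R}"
    by (intro integrable_continuous_interval continuous_intros) simp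
  moreover have "cmod (\<i> * (exp_sec lam (\<i> * of_real s) - exp_sec lam (of_real x + \<i> * of_real s)
                              - of_real (exp (- lam * s))))
                 \<le> exp (- lam * s) * side_weight (cos x) (sinh s)" for s
    unfolding norm_mult norm_ii mult_1_left by (rule norm_exp_sec_vertical_sides_le)
  ultimately show ?thesis
    using integral_norm_bound_integral[OF has_integral_integrable[OF diff]]
    unfolding integral_unique[OF diff] by blast
qed

lemma norm_exp_sec_top_le:
  fixes lam x R :: real
  assumes x: "\<bar>x\<bar> < pi / 2" and R: "1 \<le> R"
  shows "cmod (contour_integral (linepath (of_real x + \<i> * of_real R) (\<i> * of_real R)) (exp_sec lam))
         \<le> exp (- lam * R) * \<bar>x\<bar>"
proof -
  have "exp_sec lam contour_integrable_on linepath (of_real x + \<i> * of_real R) (\<i> * of_real R)"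
    using x by (intro contour_integrable_continuous_linepath continuous_on_exp_sec_segment) auto
  hence "cmod (contour_integral (linepath (of_real x + \<i> * of_real R) (\<i> * of_real R)) (exp_sec lam))
          \<le> exp (- lam * R) * cmod (\<i> * of_real R - (of_real x + \<i> * of_real R))"
  proof (rule has_contour_integral_bound_linepath[OF has_contour_integral_integral])
    fix z assume "z \<in> closed_segment (of_real x + \<i> * of_real R) (\<i> * of_real R)"
    then obtain u where "z = (1 - u) *\<^sub>R (of_real x + \<i> * of_real R) + u *\<^sub>R (\<i> * of_real R)"
      by (auto simp: in_segment)
    hence "Im z = (1 - u) * R + u * R"
      by simp
    hence "Im z = R"
      by (simp add: algebra_simps)
    thus "cmod (exp_sec lam z) \<le> exp (- lam * R)"
      using norm_exp_sec_le[of z lam] R by simp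
  qed simp
  thus ?thesis
    by simp
qed

lemma exp_sec_rectangle_estimate:
  fixes lam x R :: real
  assumes lam: "0 < lam" and x: "0 < x" "x < pi / 2" and R: "1 \<le> R"
  shows "cmod (integral {0..x} (\<lambda>t. exp (\<i> * of_real (t * lam)) / of_real (cos t)) - \<i> / of_real lam)
         \<le> integral {0..R} (\<lambda>s. exp (- lam * s) * side_weight (cos x) (sinh s))
            + exp (- lam * R) * (x + 1 / lam)"
proof -
  define B where "B = contour_integral (linepath 0 (of_real x)) (exp_sec lam)"
  define V0 where "V0 = contour_integral (linepath 0 (\<i> * of_real R)) (exp_sec lam)"
  define Vx where "Vx = contour_integral (linepath (of_real x) (of_real x + \<i> * of_real R)) (exp_sec lam)"
  define T where "T = contour_integral (linepath (of_real x + \<i> * of_real R) (\<i> * of_real R)) (exp_sec lam)"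
  define E where "E = \<i> * of_real ((1 - exp (- lam * R)) / lam)"
  define tail where "tail = \<i> * of_real (exp (- lam * R) / lam)"
  have "B = integral {0..x} (\<lambda>t. exp_sec lam (of_real t))"
    unfolding B_def using x by (simp add: contour_integral_linepath_Reals_eq)
  hence bottom: "B = integral {0..x} (\<lambda>t. exp (\<i> * of_real (t * lam)) / of_real (cos t))"
    by (simp add: exp_sec_def cos_of_real mult_ac)
  have "B + Vx + T = V0"
    unfolding B_def Vx_def T_def V0_def using x
    by (intro Cauchy_theorem_convex_quadrilateral[OF holomorphic_on_exp_sec convex_abs_Re_less]) auto
  hence "B = V0 - Vx - T"
    by (simp add: algebra_simps)
  moreover have "\<i> / of_real lam = E + tail"
    using lam by (simp add: E_def tail_def field_simps)
  ultimately have "B - \<i> / of_real lam = (V0 - Vx - E) - T - tail"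
    by simp
  hence "cmod (B - \<i> / of_real lam) \<le> cmod ((V0 - Vx - E) - T) + cmod tail"
    by (simp only: norm_triangle_ineq4)
  also have "\<dots> \<le> cmod (V0 - Vx - E) + cmod T + cmod tail"
    by (intro add_right_mono norm_triangle_ineq4)
  finally have "cmod (B - \<i> / of_real lam) \<le> cmod (V0 - Vx - E) + cmod T + cmod tail" .
  moreover have "cmod tail = exp (- lam * R) / lam"
    using lam by (simp add: tail_def norm_mult norm_divide)
  moreover have "cmod (V0 - Vx - E) \<le> integral {0..R} (\<lambda>s. exp (- lam * s) * side_weight (cos x) (sinh s))"
    unfolding V0_def Vx_def E_def using lam x R by (intro norm_exp_sec_vertical_integrals_le) auto
  moreover have "cmod T \<le> exp (- lam * R) * x"
    using norm_exp_sec_top_le[of x R lam] x R by (simp add: T_def)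
  moreover have "exp (- lam * R) * (x + 1 / lam) = exp (- lam * R) * x + exp (- lam * R) / lam"
    by (simp add: distrib_left)
  ultimately show ?thesis
    unfolding bottom by linarith
qed

theorem theorem5:
  fixes lam x :: real
  assumes "lam > 0" and "0 < x" and "x < pi / 2"
  shows "cmod (integral {0..x} (\<lambda>t. exp (\<i> * complex_of_real (t * lam)) / complex_of_real (cos t))
               - \<i> / complex_of_real lam)
         < 1 / lam - M lam + M (lam * cos x)"
proof -
  let ?lhs = "cmod (integral {0..x} (\<lambda>t. exp (\<i> * complex_of_real (t * lam)) / complex_of_real (cos t))
               - \<i> / complex_of_real lam)"
  let ?\<tau> = "\<lambda>R. integral {0..R} (\<lambda>s. exp (- lam * s) * side_weight (cos x) s)"
  have "0 < cos x" "cos x < 1"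
    using assms cos_monotone_0_pi[of 0 x] by (auto intro!: cos_gt_zero_pi)
  then obtain D where D: "0 < D"
    "\<And>R. 1 \<le> R \<Longrightarrow> integral {0..R} (\<lambda>s. exp (- lam * s) * side_weight (cos x) (sinh s)) + D \<le> ?\<tau> R"
    by (rule integral_side_weight_sinh_gap[of "cos x" lam]) blast
  have "\<forall>\<^sub>F R in at_top. ?lhs \<le> ?\<tau> R - D + exp (- lam * R) * (x + 1 / lam)"
    using eventually_ge_at_top[of 1]
  proof eventually_elim
    case (elim R)
    thus ?case
      using exp_sec_rectangle_estimate[OF assms elim] D(2)[OF elim] by linarith
  qed
  moreover have "((\<lambda>R. exp (- lam * R)) \<longlongrightarrow> 0) at_top"
    using assms(1) by real_asymp
  hence "((\<lambda>R. ?\<tau> R - D + exp (- lam * R) * (x + 1 / lam))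
           \<longlongrightarrow> 1 / lam - M lam + M (lam * cos x) - D + 0 * (x + 1 / lam)) at_top"
    using tendsto_integral_side_weight[OF assms(1) \<open>0 < cos x\<close>]
    by (intro tendsto_add tendsto_diff tendsto_mult tendsto_const)
  ultimately have "?lhs \<le> 1 / lam - M lam + M (lam * cos x) - D + 0 * (x + 1 / lam)"
    by (intro tendsto_lowerbound) auto
  with D(1) show ?thesis
    by linarith
qed

end
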